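(* Let $\varphi:A\to B$ be a homomorphism of generalized rings and $\mathfrak b$ an h-ideal of $B$. Let $\varphi^*:spec(B)\to spec(A)$ be $\mathfrak q\mapsto\varphi_{[1]}^{-1}(\mathfrak q)$. Then $V_A(\varphi_{[1]}^{-1}(\mathfrak b))$ is the closure in $spec(A)$ of $\varphi^*(V_B(\mathfrak b))$.
   Context: All sets $X,Y,Z,W$ below are finite. A partial map $f:X\rightharpoonup Y$ is a map $f:D(f)\to Y$ defined on a subset $D(f)\subseteq X$; $Set_\bullet(X,Y)$ is the set of partial maps. $\mathbb F_\bullet$ is the category of finite sets with partial bijections; $f^t$ is the inverse. $[1]=\{1\}$, $c_X:X\to[1]$ the total map. A generalized ring $A$ consists of: a functor $X\mapsto A_X$ from $\mathbb F_\bullet$ to pointed sets with $A_\emptyset=\{0\}$; $A_f=\prod_{y\in Y}A_{f^{-1}(y)}$ for $f\in Set_\bullet(X,Y)$ (so $A_{c_X}=A_X$, $A_{id_X}=(A_{[1]})^X$); multiplications $\circ:A_Y\times A_f\to A_X$ and contractions $(\,,\,):A_X\times A_f\to A_Y$, zero when an argument is zero, extended fibrewise for $g\in Set_\bullet(Y,Z)$ to $\circ:A_g\times A_f\to A_{g\circ f}$, $(\,,\,):A_{g\circ f}\times A_f\to A_g$ via $(a\circ b)^{(z)}=a^{(z)}\circ b|_z$, $(c,b)^{(z)}=(c^{(z)},b|_z)$ ($b|_z=(b^{(y)})_{y\in g^{-1}(z)}$ for the restriction $f|_z:(g\circ f)^{-1}(z)\rightharpoonup g^{-1}(z)$); and a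 unit $1\in A_{[1]}$ (with transports $1_x$, and $1_f\in A_f$ for partial bijections $f$ with components $1_{f^t(y)}$ on the image, $0$ elsewhere); satisfying for $W\xleftarrow{h}Z\xleftarrow{g}Y\xleftarrow{f}X$: $d\circ(c\circ b)=(d\circ c)\circ b$; $(d,a\circ c)=((d,c),a)$ ($d\in A_{h\circ g\circ f},a\in A_g,c\in A_f$); $(d\circ c,a)=(d,(a,c))$ ($d\in A_{h\circ g},a\in A_{g\circ f},c\in A_f$); $(d\circ a,c)=d\circ(a,c)$ ($d\in A_h,a\in A_{g\circ f},c\in A_f$); for $Z\xrightarrow{g}Y\xleftarrow{f}X$, $h\in Set_\bullet(Y,W)$, $P=\{(z,x)\in D(g)\times D(f):g(z)=f(x)\}$ with projections $\tilde f,\tilde g$, $\tilde c^{(z)}=c^{(g(z))}$, $\tilde a^{(x)}=a^{(f(x))}$: $(d,c)\circ a=(d\circ\tilde a,\tilde c)$ ($d\in A_{h\circ f},a\in A_g,c\in A_f$); $a\circ1_{id_X}=1_{id_Y}\circ a=(a,1_{id_X})=a$ ($a\in A_f$); $a\circ1_{f^t}=(a,1_f)=f_A(a)$ ($a\in A_X$, $f$ a partial bijection). A homomorphism $\varphi:A\to B$ is a family of base-point preserving maps $\varphi_X:A_X\to B_X$ preserving multiplication, contraction (componentwise on $A_f$) and $1$. An h-ideal is a subset $\mathfrak a\subseteq A_{[1]}$ with $(b\circ c,d)\in\mathfrak a$ for all finite $X$, $b,d\in A_X$, $c\in\mathfrak a^X\subseteq(A_{[1]})^X$; proper if $1\notin\mathfrak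 a$. A prime is a proper h-ideal $\mathfrak p$ with $a\circ b\in\mathfrak p\Rightarrow a\in\mathfrak p$ or $b\in\mathfrak p$; $spec(A)$ is the set of primes, with the Zariski topology whose closed sets are $V_A(\mathfrak a)=\{\mathfrak p\in spec(A):\mathfrak p\supseteq\mathfrak a\}$, $\mathfrak a\subseteq A_{[1]}$. *)

theory Defs
  imports "HOL-Library.FuncSet" "HOL-Library.Nat_Bijection"
begin

text \<open>Finite sets are modelled as finite subsets of nat; partial maps X -> Y as
  maps nat => nat option with dom inside X and ran inside Y.  [1] is the set {1}.\<close>

record 'a gring =
  carr :: "nat set \<Rightarrow> 'a set"
  zer  :: "nat set \<Rightarrow> 'a"
  tr   :: "nat set \<Rightarrow> nat set \<Rightarrow> (nat \<Rightarrow> nat option) \<Rightarrow> 'a \<Rightarrow> 'a"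
  mul  :: "nat set \<Rightarrow> nat set \<Rightarrow> (nat \<Rightarrow> nat option) \<Rightarrow> 'a \<Rightarrow> (nat \<Rightarrow> 'a) \<Rightarrow> 'a"
  con  :: "nat set \<Rightarrow> nat set \<Rightarrow> (nat \<Rightarrow> nat option) \<Rightarrow> 'a \<Rightarrow> (nat \<Rightarrow> 'a) \<Rightarrow> 'a"
  one  :: 'a

definition pmap :: "nat set \<Rightarrow> nat set \<Rightarrow> (nat \<Rightarrow> nat option) \<Rightarrow> bool" where
  "pmap X Y f \<longleftrightarrow> dom f \<subseteq> X \<and> ran f \<subseteq> Y"

definition pbij :: "nat set \<Rightarrow> nat set \<Rightarrow> (nat \<Rightarrow> nat option) \<Rightarrow> bool" where
  "pbij X Y f \<longleftrightarrow> pmap X Y f \<and> inj_on f (dom f)"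

definition fib :: "(nat \<Rightarrow> nat option) \<Rightarrow> nat \<Rightarrow> nat set" where
  "fib f y = {x. f x = Some y}"

definition idm :: "nat set \<Rightarrow> nat \<Rightarrow> nat option" where
  "idm X = (\<lambda>x. if x \<in> X then Some x else None)"

definition cmap :: "nat set \<Rightarrow> nat \<Rightarrow> nat option" where
  "cmap X = (\<lambda>x. if x \<in> X then Some 1 else None)"

definition ptr :: "(nat \<Rightarrow> nat option) \<Rightarrow> nat \<Rightarrow> nat option" where
  "ptr f = (\<lambda>y. if y \<in> ran f then Some (THE x. f x = Some y) else None)"

text \<open>A_f for f : X -> Y, as extensional tuples indexed by Y\<close>
definition tup :: "'a gring \<Rightarrow> nat set \<Rightarrow> (nat \<Rightarrow> nat option) \<Rightarrow> (nat \<Rightarrow> 'a) set" where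
  "tup A Y f = {b \<in> extensional Y. \<forall>y\<in>Y. b y \<in> carr A (fib f y)}"

definition ztup :: "'a gring \<Rightarrow> nat set \<Rightarrow> (nat \<Rightarrow> nat option) \<Rightarrow> nat \<Rightarrow> 'a" where
  "ztup A Y f = restrict (\<lambda>y. zer A (fib f y)) Y"

text \<open>fibrewise multiplication A_g x A_f -> A_(g o f), g : Y -> Z, f : X -> Y\<close>
definition fmul :: "'a gring \<Rightarrow> nat set \<Rightarrow> (nat \<Rightarrow> nat option) \<Rightarrow> (nat \<Rightarrow> nat option)
    \<Rightarrow> (nat \<Rightarrow> 'a) \<Rightarrow> (nat \<Rightarrow> 'a) \<Rightarrow> nat \<Rightarrow> 'a" where
  "fmul A Z g f a b = restrict (\<lambda>z. mul A (fib (g \<circ>\<^sub>m f) z) (fib g z)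
       (f |` fib (g \<circ>\<^sub>m f) z) (a z) (restrict b (fib g z))) Z"

text \<open>fibrewise contraction A_(g o f) x A_f -> A_g\<close>
definition fcon :: "'a gring \<Rightarrow> nat set \<Rightarrow> (nat \<Rightarrow> nat option) \<Rightarrow> (nat \<Rightarrow> nat option)
    \<Rightarrow> (nat \<Rightarrow> 'a) \<Rightarrow> (nat \<Rightarrow> 'a) \<Rightarrow> nat \<Rightarrow> 'a" where
  "fcon A Z g f c b = restrict (\<lambda>z. con A (fib (g \<circ>\<^sub>m f) z) (fib g z)
       (f |` fib (g \<circ>\<^sub>m f) z) (c z) (restrict b (fib g z))) Z"

definition unit_at :: "'a gring \<Rightarrow> nat \<Rightarrow> 'a" where
  "unit_at A x = tr A {1} {x} [1 \<mapsto> x] (one A)"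

definition unit_pb :: "'a gring \<Rightarrow> nat set \<Rightarrow> (nat \<Rightarrow> nat option) \<Rightarrow> nat \<Rightarrow> 'a" where
  "unit_pb A Y f = restrict (\<lambda>y. if y \<in> ran f then unit_at A (THE x. f x = Some y) else zer A {}) Y"

text \<open>the identification (A_[1])^X = A_(id_X)\<close>
definition embed :: "'a gring \<Rightarrow> nat set \<Rightarrow> (nat \<Rightarrow> 'a) \<Rightarrow> nat \<Rightarrow> 'a" where
  "embed A X c = restrict (\<lambda>x. tr A {1} {x} [1 \<mapsto> x] (c x)) X"

text \<open>fibre product P of Z -g-> Y <-f- X, encoded into nat, with projections\<close>
definition pb :: "(nat \<Rightarrow> nat option) \<Rightarrow> (nat \<Rightarrow> nat option) \<Rightarrow> nat set" where
  "pb g f = prod_encode ` {(z, x). z \<in> dom g \<and> x \<in> dom f \<and> g z = f x}"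

definition pbf :: "(nat \<Rightarrow> nat option) \<Rightarrow> (nat \<Rightarrow> nat option) \<Rightarrow> nat \<Rightarrow> nat option" where
  "pbf g f = (\<lambda>p. if p \<in> pb g f then Some (fst (prod_decode p)) else None)"

definition pbg :: "(nat \<Rightarrow> nat option) \<Rightarrow> (nat \<Rightarrow> nat option) \<Rightarrow> nat \<Rightarrow> nat option" where
  "pbg g f = (\<lambda>p. if p \<in> pb g f then Some (snd (prod_decode p)) else None)"

text \<open>a~ in A_(g~) (indexed by X): a~^(x) = a^(f(x)), transported along the canonical bijection\<close>
definition pb_a :: "'a gring \<Rightarrow> (nat \<Rightarrow> nat option) \<Rightarrow> (nat \<Rightarrow> nat option) \<Rightarrow> nat set
    \<Rightarrow> (nat \<Rightarrow> 'a) \<Rightarrow> nat \<Rightarrow> 'a" where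
  "pb_a A g f X a = restrict (\<lambda>x. if x \<in> dom f then
      tr A (fib g (the (f x))) (fib (pbg g f) x)
        (\<lambda>z. if z \<in> fib g (the (f x)) then Some (prod_encode (z, x)) else None) (a (the (f x)))
      else zer A {}) X"

text \<open>c~ in A_(f~) (indexed by Z): c~^(z) = c^(g(z))\<close>
definition pb_c :: "'a gring \<Rightarrow> (nat \<Rightarrow> nat option) \<Rightarrow> (nat \<Rightarrow> nat option) \<Rightarrow> nat set
    \<Rightarrow> (nat \<Rightarrow> 'a) \<Rightarrow> nat \<Rightarrow> 'a" where
  "pb_c A g f Z c = restrict (\<lambda>z. if z \<in> dom g then
      tr A (fib f (the (g z))) (fib (pbf g f) z)
        (\<lambda>x. if x \<in> fib f (the (g z)) then Some (prod_encode (z, x)) else None) (c (the (g z)))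
      else zer A {}) Z"

definition gring :: "'a gring \<Rightarrow> bool" where
  "gring A \<longleftrightarrow>
    carr A {} = {zer A {}} \<and>
    (\<forall>X. finite X \<longrightarrow> zer A X \<in> carr A X) \<and>
    (\<forall>X Y f a. finite X \<and> finite Y \<and> pbij X Y f \<and> a \<in> carr A X \<longrightarrow> tr A X Y f a \<in> carr A Y) \<and>
    (\<forall>X Y f. finite X \<and> finite Y \<and> pbij X Y f \<longrightarrow> tr A X Y f (zer A X) = zer A Y) \<and>
    (\<forall>X a. finite X \<and> a \<in> carr A X \<longrightarrow> tr A X X (idm X) a = a) \<and>
    (\<forall>X Y Z f g a. finite X \<and> finite Y \<and> finite Z \<and> pbij X Y f \<and> pbij Y Z g \<and> a \<in> carr A X \<longrightarrow>
        tr A X Z (g \<circ>\<^sub>m f) a = tr A Y Z g (tr A X Y f a)) \<and>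
    (\<forall>X Y f a b. finite X \<and> finite Y \<and> pmap X Y f \<and> a \<in> carr A Y \<and> b \<in> tup A Y f \<longrightarrow>
        mul A X Y f a b \<in> carr A X \<and>
        ((a = zer A Y \<or> b = ztup A Y f) \<longrightarrow> mul A X Y f a b = zer A X)) \<and>
    (\<forall>X Y f c b. finite X \<and> finite Y \<and> pmap X Y f \<and> c \<in> carr A X \<and> b \<in> tup A Y f \<longrightarrow>
        con A X Y f c b \<in> carr A Y \<and>
        ((c = zer A X \<or> b = ztup A Y f) \<longrightarrow> con A X Y f c b = zer A Y)) \<and>
    one A \<in> carr A {1} \<and>
    (\<forall>W Z Y X h g f. finite W \<and> finite Z \<and> finite Y \<and> finite X \<and>
        pmap Z W h \<and> pmap Y Z g \<and> pmap X Y f \<longrightarrow>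
      (\<forall>d\<in>tup A W h. \<forall>c\<in>tup A Z g. \<forall>b\<in>tup A Y f.
          fmul A W h (g \<circ>\<^sub>m f) d (fmul A Z g f c b) = fmul A W (h \<circ>\<^sub>m g) f (fmul A W h g d c) b) \<and>
      (\<forall>d\<in>tup A W (h \<circ>\<^sub>m g \<circ>\<^sub>m f). \<forall>a\<in>tup A Z g. \<forall>c\<in>tup A Y f.
          fcon A W h (g \<circ>\<^sub>m f) d (fmul A Z g f a c) = fcon A W h g (fcon A W (h \<circ>\<^sub>m g) f d c) a) \<and>
      (\<forall>d\<in>tup A W (h \<circ>\<^sub>m g). \<forall>a\<in>tup A Z (g \<circ>\<^sub>m f). \<forall>c\<in>tup A Y f.
          fcon A W h (g \<circ>\<^sub>m f) (fmul A W (h \<circ>\<^sub>m g) f d c) a = fcon A W h g d (fcon A Z g f a c)) \<and>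
      (\<forall>d\<in>tup A W h. \<forall>a\<in>tup A Z (g \<circ>\<^sub>m f). \<forall>c\<in>tup A Y f.
          fcon A W (h \<circ>\<^sub>m g) f (fmul A W h (g \<circ>\<^sub>m f) d a) c = fmul A W h g d (fcon A Z g f a c))) \<and>
    (\<forall>Z Y X W g f h. finite Z \<and> finite Y \<and> finite X \<and> finite W \<and>
        pmap Z Y g \<and> pmap X Y f \<and> pmap Y W h \<longrightarrow>
      (\<forall>d\<in>tup A W (h \<circ>\<^sub>m f). \<forall>a\<in>tup A Y g. \<forall>c\<in>tup A Y f.
          fmul A W h g (fcon A W h f d c) a =
          fcon A W (h \<circ>\<^sub>m g) (pbf g f) (fmul A W (h \<circ>\<^sub>m f) (pbg g f) d (pb_a A g f X a)) (pb_c A g f Z c))) \<and>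
    (\<forall>X Y f. finite X \<and> finite Y \<and> pmap X Y f \<longrightarrow>
      (\<forall>a\<in>tup A Y f.
          fmul A Y f (idm X) a (unit_pb A X (idm X)) = a \<and>
          fmul A Y (idm Y) f (unit_pb A Y (idm Y)) a = a \<and>
          fcon A Y f (idm X) a (unit_pb A X (idm X)) = a)) \<and>
    (\<forall>X Y f. finite X \<and> finite Y \<and> pbij X Y f \<longrightarrow>
      (\<forall>a\<in>carr A X.
          mul A Y X (ptr f) a (unit_pb A X (ptr f)) = tr A X Y f a \<and>
          con A X Y f a (unit_pb A Y f) = tr A X Y f a))"

definition htup :: "(nat set \<Rightarrow> 'a \<Rightarrow> 'b) \<Rightarrow> nat set \<Rightarrow> (nat \<Rightarrow> nat option) \<Rightarrow> (nat \<Rightarrow> 'a) \<Rightarrow> nat \<Rightarrow> 'b" where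
  "htup \<phi> Y f b = restrict (\<lambda>y. \<phi> (fib f y) (b y)) Y"

definition ghom :: "'a gring \<Rightarrow> 'b gring \<Rightarrow> (nat set \<Rightarrow> 'a \<Rightarrow> 'b) \<Rightarrow> bool" where
  "ghom A B \<phi> \<longleftrightarrow>
    (\<forall>X. finite X \<longrightarrow> (\<forall>a\<in>carr A X. \<phi> X a \<in> carr B X) \<and> \<phi> X (zer A X) = zer B X) \<and>
    (\<forall>X Y f a b. finite X \<and> finite Y \<and> pmap X Y f \<and> a \<in> carr A Y \<and> b \<in> tup A Y f \<longrightarrow>
        \<phi> X (mul A X Y f a b) = mul B X Y f (\<phi> Y a) (htup \<phi> Y f b)) \<and>
    (\<forall>X Y f c b. finite X \<and> finite Y \<and> pmap X Y f \<and> c \<in> carr A X \<and> b \<in> tup A Y f \<longrightarrow>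
        \<phi> Y (con A X Y f c b) = con B X Y f (\<phi> X c) (htup \<phi> Y f b)) \<and>
    \<phi> {1} (one A) = one B"

definition mul1 :: "'a gring \<Rightarrow> 'a \<Rightarrow> 'a \<Rightarrow> 'a" where
  "mul1 A a b = mul A {1} {1} (idm {1}) a (restrict (\<lambda>_. b) {1})"

definition h_ideal :: "'a gring \<Rightarrow> 'a set \<Rightarrow> bool" where
  "h_ideal A I \<longleftrightarrow> I \<subseteq> carr A {1} \<and>
    (\<forall>X. finite X \<longrightarrow> (\<forall>b\<in>carr A X. \<forall>d\<in>carr A X. \<forall>c\<in>extensional X. (\<forall>x\<in>X. c x \<in> I) \<longrightarrow>
       con A X {1} (cmap X) (mul A X X (idm X) b (embed A X c)) (restrict (\<lambda>_. d) {1}) \<in> I))"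

definition gprime :: "'a gring \<Rightarrow> 'a set \<Rightarrow> bool" where
  "gprime A P \<longleftrightarrow> h_ideal A P \<and> one A \<notin> P \<and>
    (\<forall>a\<in>carr A {1}. \<forall>b\<in>carr A {1}. mul1 A a b \<in> P \<longrightarrow> a \<in> P \<or> b \<in> P)"

definition gspec :: "'a gring \<Rightarrow> 'a set set" where
  "gspec A = {P. gprime A P}"

definition Vz :: "'a gring \<Rightarrow> 'a set \<Rightarrow> 'a set set" where
  "Vz A I = {P \<in> gspec A. I \<subseteq> P}"

definition zariski_closure :: "'a gring \<Rightarrow> 'a set set \<Rightarrow> 'a set set" where
  "zariski_closure A S = gspec A \<inter> \<Inter>{Vz A I | I. I \<subseteq> carr A {1} \<and> S \<subseteq> Vz A I}"

definition hpre :: "'a gring \<Rightarrow> (nat set \<Rightarrow> 'a \<Rightarrow> 'b) \<Rightarrow> 'b set \<Rightarrow> 'a set" where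
  "hpre A \<phi> Q = {a \<in> carr A {1}. \<phi> {1} a \<in> Q}"

end

theory Submission
  imports Defs
begin

text \<open>Let P be a prime of A containing the preimage of b, and let T be the image of A_[1] - P
  under \<phi>_[1]. Then b avoids T, and by Zorn's lemma there is an h-ideal Q of B containing b and
  maximal among those avoiding T. Such a Q is prime, by the classical argument with ideal quotients
  (Q : y); this needs the multiplication of A_[1] to be commutative and right multiplication to pass
  through the generating operation (b \<circ> c, d) of h-ideals, and both facts are read off from the
  axioms instantiated at singletons and at the fibre product of [1] \<rightarrow> [1] \<leftarrow> X.
  Since the preimage of Q lies in P, every closed set containing \<phi>*(V(b)) contains P. The other
  inclusion holds because preimages of primes are prime.\<close>

declare One_nat_def [simp del] \<comment> \<open>keeps the index set {1} from turning into {Suc 0}\<close>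

lemma gring_tr_closed:
  "gring A \<Longrightarrow> finite X \<Longrightarrow> finite Y \<Longrightarrow> pbij X Y f \<Longrightarrow> a \<in> carr A X \<Longrightarrow> tr A X Y f a \<in> carr A Y"
  unfolding gring_def by (elim conjE) simp

lemma gring_tr_id: "gring A \<Longrightarrow> finite X \<Longrightarrow> a \<in> carr A X \<Longrightarrow> tr A X X (idm X) a = a"
  unfolding gring_def by (elim conjE) simp

lemma gring_mul_closed:
  "gring A \<Longrightarrow> finite X \<Longrightarrow> finite Y \<Longrightarrow> pmap X Y f \<Longrightarrow> a \<in> carr A Y \<Longrightarrow> b \<in> tup A Y f \<Longrightarrow>
    mul A X Y f a b \<in> carr A X"
  unfolding gring_def by (elim conjE) simp

lemma gring_con_closed:
  "gring A \<Longrightarrow> finite X \<Longrightarrow> finite Y \<Longrightarrow> pmap X Y f \<Longrightarrow> c \<in> carr A X \<Longrightarrow> b \<in> tup A Y f \<Longrightarrow>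
    con A X Y f c b \<in> carr A Y"
  unfolding gring_def by (elim conjE) simp

lemma gring_one_closed: "gring A \<Longrightarrow> one A \<in> carr A {1}"
  unfolding gring_def by (elim conjE)

lemma gring_fmul_assoc:
  "gring A \<Longrightarrow> finite W \<Longrightarrow> finite Z \<Longrightarrow> finite Y \<Longrightarrow> finite X \<Longrightarrow>
    pmap Z W h \<Longrightarrow> pmap Y Z g \<Longrightarrow> pmap X Y f \<Longrightarrow>
    d \<in> tup A W h \<Longrightarrow> c \<in> tup A Z g \<Longrightarrow> b \<in> tup A Y f \<Longrightarrow>
    fmul A W h (g \<circ>\<^sub>m f) d (fmul A Z g f c b) = fmul A W (h \<circ>\<^sub>m g) f (fmul A W h g d c) b"
  unfolding gring_def by (elim conjE) simp

lemma gring_fcon_fmul_right: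
  "gring A \<Longrightarrow> finite W \<Longrightarrow> finite Z \<Longrightarrow> finite Y \<Longrightarrow> finite X \<Longrightarrow>
    pmap Z W h \<Longrightarrow> pmap Y Z g \<Longrightarrow> pmap X Y f \<Longrightarrow>
    d \<in> tup A W (h \<circ>\<^sub>m g \<circ>\<^sub>m f) \<Longrightarrow> a \<in> tup A Z g \<Longrightarrow> c \<in> tup A Y f \<Longrightarrow>
    fcon A W h (g \<circ>\<^sub>m f) d (fmul A Z g f a c) = fcon A W h g (fcon A W (h \<circ>\<^sub>m g) f d c) a"
  unfolding gring_def by (elim conjE) simp

lemma gring_fcon_fmul_left:
  "gring A \<Longrightarrow> finite W \<Longrightarrow> finite Z \<Longrightarrow> finite Y \<Longrightarrow> finite X \<Longrightarrow>
    pmap Z W h \<Longrightarrow> pmap Y Z g \<Longrightarrow> pmap X Y f \<Longrightarrow>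
    d \<in> tup A W (h \<circ>\<^sub>m g) \<Longrightarrow> a \<in> tup A Z (g \<circ>\<^sub>m f) \<Longrightarrow> c \<in> tup A Y f \<Longrightarrow>
    fcon A W h (g \<circ>\<^sub>m f) (fmul A W (h \<circ>\<^sub>m g) f d c) a = fcon A W h g d (fcon A Z g f a c)"
  unfolding gring_def by (elim conjE) simp

lemma gring_fcon_fmul_assoc:
  "gring A \<Longrightarrow> finite W \<Longrightarrow> finite Z \<Longrightarrow> finite Y \<Longrightarrow> finite X \<Longrightarrow>
    pmap Z W h \<Longrightarrow> pmap Y Z g \<Longrightarrow> pmap X Y f \<Longrightarrow>
    d \<in> tup A W h \<Longrightarrow> a \<in> tup A Z (g \<circ>\<^sub>m f) \<Longrightarrow> c \<in> tup A Y f \<Longrightarrow>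
    fcon A W (h \<circ>\<^sub>m g) f (fmul A W h (g \<circ>\<^sub>m f) d a) c = fmul A W h g d (fcon A Z g f a c)"
  unfolding gring_def by (elim conjE) simp

lemma gring_fmul_fcon_pullback:
  "gring A \<Longrightarrow> finite Z \<Longrightarrow> finite Y \<Longrightarrow> finite X \<Longrightarrow> finite W \<Longrightarrow>
    pmap Z Y g \<Longrightarrow> pmap X Y f \<Longrightarrow> pmap Y W h \<Longrightarrow>
    d \<in> tup A W (h \<circ>\<^sub>m f) \<Longrightarrow> a \<in> tup A Y g \<Longrightarrow> c \<in> tup A Y f \<Longrightarrow>
    fmul A W h g (fcon A W h f d c) a =
      fcon A W (h \<circ>\<^sub>m g) (pbf g f) (fmul A W (h \<circ>\<^sub>m f) (pbg g f) d (pb_a A g f X a)) (pb_c A g f Z c)"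
  unfolding gring_def by (elim conjE) simp

lemma gring_fmul_unit_right:
  "gring A \<Longrightarrow> finite X \<Longrightarrow> finite Y \<Longrightarrow> pmap X Y f \<Longrightarrow> a \<in> tup A Y f \<Longrightarrow>
    fmul A Y f (idm X) a (unit_pb A X (idm X)) = a"
  unfolding gring_def by (elim conjE) simp

lemma gring_fmul_unit_left:
  "gring A \<Longrightarrow> finite X \<Longrightarrow> finite Y \<Longrightarrow> pmap X Y f \<Longrightarrow> a \<in> tup A Y f \<Longrightarrow>
    fmul A Y (idm Y) f (unit_pb A Y (idm Y)) a = a"
  unfolding gring_def by (elim conjE) simp

lemma gring_fcon_unit:
  "gring A \<Longrightarrow> finite X \<Longrightarrow> finite Y \<Longrightarrow> pmap X Y f \<Longrightarrow> a \<in> tup A Y f \<Longrightarrow>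
    fcon A Y f (idm X) a (unit_pb A X (idm X)) = a"
  unfolding gring_def by (elim conjE) simp

lemma gring_mul_unit_transport:
  "gring A \<Longrightarrow> finite X \<Longrightarrow> finite Y \<Longrightarrow> pbij X Y f \<Longrightarrow> a \<in> carr A X \<Longrightarrow>
    mul A Y X (ptr f) a (unit_pb A X (ptr f)) = tr A X Y f a"
  unfolding gring_def by (elim conjE) simp

lemma gring_con_unit_transport:
  "gring A \<Longrightarrow> finite X \<Longrightarrow> finite Y \<Longrightarrow> pbij X Y f \<Longrightarrow> a \<in> carr A X \<Longrightarrow>
    con A X Y f a (unit_pb A Y f) = tr A X Y f a"
  unfolding gring_def by (elim conjE) simp

lemma ghom_closed: "ghom A B \<phi> \<Longrightarrow> finite X \<Longrightarrow> a \<in> carr A X \<Longrightarrow> \<phi> X a \<in> carr B X"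
  unfolding ghom_def by simp

lemma ghom_mul:
  "ghom A B \<phi> \<Longrightarrow> finite X \<Longrightarrow> finite Y \<Longrightarrow> pmap X Y f \<Longrightarrow> a \<in> carr A Y \<Longrightarrow> b \<in> tup A Y f \<Longrightarrow>
    \<phi> X (mul A X Y f a b) = mul B X Y f (\<phi> Y a) (htup \<phi> Y f b)"
  unfolding ghom_def by (elim conjE) simp

lemma ghom_con:
  "ghom A B \<phi> \<Longrightarrow> finite X \<Longrightarrow> finite Y \<Longrightarrow> pmap X Y f \<Longrightarrow> c \<in> carr A X \<Longrightarrow> b \<in> tup A Y f \<Longrightarrow>
    \<phi> Y (con A X Y f c b) = con B X Y f (\<phi> X c) (htup \<phi> Y f b)"
  unfolding ghom_def by (elim conjE) simp

lemma ghom_one: "ghom A B \<phi> \<Longrightarrow> \<phi> {1} (one A) = one B"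
  unfolding ghom_def by simp

section \<open>Singletons\<close>

abbreviation single :: "nat \<Rightarrow> 'a \<Rightarrow> nat \<Rightarrow> 'a" where
  "single y v \<equiv> restrict (\<lambda>_. v) {y}"

abbreviation smul :: "'a gring \<Rightarrow> nat \<Rightarrow> nat \<Rightarrow> 'a \<Rightarrow> 'a \<Rightarrow> 'a" where
  "smul A x y a b \<equiv> mul A {x} {y} [x \<mapsto> y] a (single y b)"

abbreviation scon :: "'a gring \<Rightarrow> nat \<Rightarrow> nat \<Rightarrow> 'a \<Rightarrow> 'a \<Rightarrow> 'a" where
  "scon A x y c b \<equiv> con A {x} {y} [x \<mapsto> y] c (single y b)"

lemma pmap_singleton: "pmap {a} {b} [a \<mapsto> b]"
  by (auto simp: pmap_def)

lemma pbij_singleton: "pbij {a} {b} [a \<mapsto> b]"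
  by (auto simp: pbij_def pmap_def)

lemma idm_singleton: "idm {a} = [a \<mapsto> a]"
  by (auto simp: idm_def)

lemma fib_singleton: "fib [a \<mapsto> b] c = (if c = b then {a} else {})"
  by (auto simp: fib_def)

lemma map_comp_singleton: "[b \<mapsto> c] \<circ>\<^sub>m [a \<mapsto> b'] = (if b = b' then [a \<mapsto> c] else Map.empty)"
  by (auto simp: map_comp_def)

lemma restrict_map_singleton: "[a \<mapsto> b] |` {a} = [a \<mapsto> b]"
  by (auto simp: restrict_map_def)

lemma ptr_singleton: "ptr [a \<mapsto> b] = [b \<mapsto> a]"
  by (auto simp: ptr_def)

lemma unit_pb_singleton: "unit_pb A {y} [x \<mapsto> y] = single y (unit_at A x)"
  by (auto simp: unit_pb_def)

lemmas singleton_simps = fib_singleton map_comp_singleton restrict_map_singleton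
  unit_pb_singleton idm_singleton ptr_singleton

lemma tup_singleton: "v \<in> carr A {a} \<Longrightarrow> single b v \<in> tup A {b} [a \<mapsto> b]"
  by (auto simp: tup_def fib_singleton)

lemma fmul_apply:
  "z \<in> Z \<Longrightarrow> fmul A Z g f a b z =
    mul A (fib (g \<circ>\<^sub>m f) z) (fib g z) (f |` fib (g \<circ>\<^sub>m f) z) (a z) (restrict b (fib g z))"
  by (simp add: fmul_def)

lemma fcon_apply:
  "z \<in> Z \<Longrightarrow> fcon A Z g f a b z =
    con A (fib (g \<circ>\<^sub>m f) z) (fib g z) (f |` fib (g \<circ>\<^sub>m f) z) (a z) (restrict b (fib g z))"
  by (simp add: fcon_def)

lemma restrict_fmul_singleton: "restrict (fmul A {z} g f a b) {z} = single z (fmul A {z} g f a b z)"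
  by auto

lemma restrict_fcon_singleton: "restrict (fcon A {z} g f a b) {z} = single z (fcon A {z} g f a b z)"
  by auto

lemma unit_at_one: "gring A \<Longrightarrow> unit_at A 1 = one A"
  unfolding unit_at_def idm_singleton[symmetric] by (intro gring_tr_id gring_one_closed) simp_all

lemma unit_at_closed: "gring A \<Longrightarrow> unit_at A x \<in> carr A {x}"
  unfolding unit_at_def by (intro gring_tr_closed gring_one_closed pbij_singleton) simp_all

lemma transport_singleton_closed:
  "gring A \<Longrightarrow> a \<in> carr A {x} \<Longrightarrow> tr A {x} {y} [x \<mapsto> y] a \<in> carr A {y}"
  by (intro gring_tr_closed pbij_singleton) simp_all

lemma smul_closed: "gring A \<Longrightarrow> a \<in> carr A {y} \<Longrightarrow> b \<in> carr A {x} \<Longrightarrow> smul A x y a b \<in> carr A {x}"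
  by (intro gring_mul_closed pmap_singleton tup_singleton) simp_all

lemma scon_closed: "gring A \<Longrightarrow> c \<in> carr A {x} \<Longrightarrow> b \<in> carr A {x} \<Longrightarrow> scon A x y c b \<in> carr A {y}"
  by (intro gring_con_closed pmap_singleton tup_singleton) simp_all

lemma smul_assoc:
  assumes G: "gring A" and d: "d \<in> carr A {z}" and c: "c \<in> carr A {y}" and b: "b \<in> carr A {x}"
  shows "smul A x z d (smul A x y c b) = smul A x y (smul A y z d c) b"
proof -
  have "fmul A {z} [z \<mapsto> z] ([y \<mapsto> z] \<circ>\<^sub>m [x \<mapsto> y]) (single z d)
        (fmul A {z} [y \<mapsto> z] [x \<mapsto> y] (single z c) (single y b)) =
      fmul A {z} ([z \<mapsto> z] \<circ>\<^sub>m [y \<mapsto> z]) [x \<mapsto> y]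
        (fmul A {z} [z \<mapsto> z] [y \<mapsto> z] (single z d) (single z c)) (single y b)"
    by (rule gring_fmul_assoc[OF G _ _ _ _ pmap_singleton pmap_singleton pmap_singleton
          tup_singleton[OF d] tup_singleton[OF c] tup_singleton[OF b]]) simp_all
  from fun_cong[OF this, of z] show ?thesis
    by (simp add: fmul_apply restrict_fmul_singleton singleton_simps)
qed

lemma scon_smul_right:
  assumes G: "gring A" and d: "d \<in> carr A {x}" and a: "a \<in> carr A {y}" and c: "c \<in> carr A {x}"
  shows "scon A x z d (smul A x y a c) = scon A y z (scon A x y d c) a"
proof -
  have d': "single z d \<in> tup A {z} ([z \<mapsto> z] \<circ>\<^sub>m [y \<mapsto> z] \<circ>\<^sub>m [x \<mapsto> y])"
    using tup_singleton[OF d] by (simp add: map_comp_singleton)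
  have "fcon A {z} [z \<mapsto> z] ([y \<mapsto> z] \<circ>\<^sub>m [x \<mapsto> y]) (single z d)
        (fmul A {z} [y \<mapsto> z] [x \<mapsto> y] (single z a) (single y c)) =
      fcon A {z} [z \<mapsto> z] [y \<mapsto> z]
        (fcon A {z} ([z \<mapsto> z] \<circ>\<^sub>m [y \<mapsto> z]) [x \<mapsto> y] (single z d) (single y c)) (single z a)"
    by (rule gring_fcon_fmul_right[OF G _ _ _ _ pmap_singleton pmap_singleton pmap_singleton
          d' tup_singleton[OF a] tup_singleton[OF c]]) simp_all
  from fun_cong[OF this, of z] show ?thesis
    by (simp add: fmul_apply fcon_apply restrict_fmul_singleton restrict_fcon_singleton singleton_simps)
qed

lemma scon_smul_left:
  assumes G: "gring A" and d: "d \<in> carr A {y}" and c: "c \<in> carr A {x}" and a: "a \<in> carr A {x}"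
  shows "scon A x z (smul A x y d c) a = scon A y z d (scon A x y a c)"
proof -
  have d': "single z d \<in> tup A {z} ([z \<mapsto> z] \<circ>\<^sub>m [y \<mapsto> z])"
    using tup_singleton[OF d] by (simp add: map_comp_singleton)
  have a': "single z a \<in> tup A {z} ([y \<mapsto> z] \<circ>\<^sub>m [x \<mapsto> y])"
    using tup_singleton[OF a] by (simp add: map_comp_singleton)
  have "fcon A {z} [z \<mapsto> z] ([y \<mapsto> z] \<circ>\<^sub>m [x \<mapsto> y])
        (fmul A {z} ([z \<mapsto> z] \<circ>\<^sub>m [y \<mapsto> z]) [x \<mapsto> y] (single z d) (single y c)) (single z a) =
      fcon A {z} [z \<mapsto> z] [y \<mapsto> z] (single z d)
        (fcon A {z} [y \<mapsto> z] [x \<mapsto> y] (single z a) (single y c))"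
    by (rule gring_fcon_fmul_left[OF G _ _ _ _ pmap_singleton pmap_singleton pmap_singleton
          d' a' tup_singleton[OF c]]) simp_all
  from fun_cong[OF this, of z] show ?thesis
    by (simp add: fmul_apply fcon_apply restrict_fmul_singleton restrict_fcon_singleton singleton_simps)
qed

lemma scon_smul_assoc:
  assumes G: "gring A" and d: "d \<in> carr A {z}" and a: "a \<in> carr A {x}" and c: "c \<in> carr A {x}"
  shows "scon A x y (smul A x z d a) c = smul A y z d (scon A x y a c)"
proof -
  have a': "single z a \<in> tup A {z} ([y \<mapsto> z] \<circ>\<^sub>m [x \<mapsto> y])"
    using tup_singleton[OF a] by (simp add: map_comp_singleton)
  have "fcon A {z} ([z \<mapsto> z] \<circ>\<^sub>m [y \<mapsto> z]) [x \<mapsto> y]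
        (fmul A {z} [z \<mapsto> z] ([y \<mapsto> z] \<circ>\<^sub>m [x \<mapsto> y]) (single z d) (single z a)) (single y c) =
      fmul A {z} [z \<mapsto> z] [y \<mapsto> z] (single z d)
        (fcon A {z} [y \<mapsto> z] [x \<mapsto> y] (single z a) (single y c))"
    by (rule gring_fcon_fmul_assoc[OF G _ _ _ _ pmap_singleton pmap_singleton pmap_singleton
          tup_singleton[OF d] a' tup_singleton[OF c]]) simp_all
  from fun_cong[OF this, of z] show ?thesis
    by (simp add: fmul_apply fcon_apply restrict_fmul_singleton restrict_fcon_singleton singleton_simps)
qed

lemma smul_unit_at_left:
  assumes G: "gring A" and a: "a \<in> carr A {x}"
  shows "smul A x y (unit_at A y) a = a"
proof -
  have "fmul A {y} (idm {y}) [x \<mapsto> y] (unit_pb A {y} (idm {y})) (single y a) = single y a"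
    by (rule gring_fmul_unit_left[OF G _ _ pmap_singleton tup_singleton[OF a]]) simp_all
  from fun_cong[OF this, of y] show ?thesis
    by (simp add: fmul_apply restrict_fmul_singleton singleton_simps)
qed

lemma smul_unit_at_right:
  assumes G: "gring A" and a: "a \<in> carr A {x}"
  shows "smul A x x a (unit_at A x) = a"
proof -
  have "fmul A {x} [x \<mapsto> x] (idm {x}) (single x a) (unit_pb A {x} (idm {x})) = single x a"
    by (rule gring_fmul_unit_right[OF G _ _ pmap_singleton tup_singleton[OF a]]) simp_all
  from fun_cong[OF this, of x] show ?thesis
    by (simp add: fmul_apply restrict_fmul_singleton singleton_simps)
qed

lemma scon_unit_at_right:
  assumes G: "gring A" and a: "a \<in> carr A {x}"
  shows "scon A x x a (unit_at A x) = a"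
proof -
  have "fcon A {x} [x \<mapsto> x] (idm {x}) (single x a) (unit_pb A {x} (idm {x})) = single x a"
    by (rule gring_fcon_unit[OF G _ _ pmap_singleton tup_singleton[OF a]]) simp_all
  from fun_cong[OF this, of x] show ?thesis by (simp add: fcon_apply singleton_simps)
qed

lemma transport_singleton_eq_smul:
  assumes G: "gring A" and a: "a \<in> carr A {x}"
  shows "tr A {x} {y} [x \<mapsto> y] a = smul A y x a (unit_at A y)"
  using gring_mul_unit_transport[OF G _ _ pbij_singleton a] by (simp add: singleton_simps)

lemma transport_singleton_eq_scon:
  assumes G: "gring A" and a: "a \<in> carr A {x}"
  shows "tr A {x} {y} [x \<mapsto> y] a = scon A x y a (unit_at A x)"
  using gring_con_unit_transport[OF G _ _ pbij_singleton a] by (simp add: singleton_simps)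

section \<open>The ring A_[1]\<close>

abbreviation con1 :: "'a gring \<Rightarrow> 'a \<Rightarrow> 'a \<Rightarrow> 'a" where
  "con1 A \<equiv> scon A 1 1"

lemma mul1_eq_smul: "mul1 A a b = smul A 1 1 a b"
  by (simp add: mul1_def idm_singleton)

lemma mul1_closed: "gring A \<Longrightarrow> a \<in> carr A {1} \<Longrightarrow> b \<in> carr A {1} \<Longrightarrow> mul1 A a b \<in> carr A {1}"
  by (simp add: mul1_eq_smul smul_closed)

lemma con1_closed: "gring A \<Longrightarrow> a \<in> carr A {1} \<Longrightarrow> b \<in> carr A {1} \<Longrightarrow> con1 A a b \<in> carr A {1}"
  by (rule scon_closed)

lemma mul1_one_right: "gring A \<Longrightarrow> a \<in> carr A {1} \<Longrightarrow> mul1 A a (one A) = a"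
  using smul_unit_at_right[of A a 1] by (simp add: mul1_eq_smul unit_at_one)

lemma mul1_one_left: "gring A \<Longrightarrow> a \<in> carr A {1} \<Longrightarrow> mul1 A (one A) a = a"
  using smul_unit_at_left[of A a 1 1] by (simp add: mul1_eq_smul unit_at_one)

lemma con1_one_right: "gring A \<Longrightarrow> a \<in> carr A {1} \<Longrightarrow> con1 A a (one A) = a"
  using scon_unit_at_right[of A a 1] by (simp add: unit_at_one)

lemma con1_mul1: "gring A \<Longrightarrow> d \<in> carr A {1} \<Longrightarrow> a \<in> carr A {1} \<Longrightarrow> c \<in> carr A {1} \<Longrightarrow>
    con1 A (mul1 A d a) c = mul1 A d (con1 A a c)"
  by (simp add: mul1_eq_smul scon_smul_assoc)

lemma con1_mul1_con1: "gring A \<Longrightarrow> d \<in> carr A {1} \<Longrightarrow> a \<in> carr A {1} \<Longrightarrow> c \<in> carr A {1} \<Longrightarrow>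
    con1 A (mul1 A d c) a = con1 A d (con1 A a c)"
  by (simp add: mul1_eq_smul scon_smul_left)

lemma smul_transport_left:
  assumes G: "gring A" and a: "a \<in> carr A {1}" and b: "b \<in> carr A {1}"
  shows "smul A 1 r (tr A {1} {r} [1 \<mapsto> r] a) b = mul1 A a b"
proof -
  have "smul A 1 r (tr A {1} {r} [1 \<mapsto> r] a) b = smul A 1 r (smul A r 1 a (unit_at A r)) b"
    using transport_singleton_eq_smul[OF G a] by simp
  also have "\<dots> = smul A 1 1 a (smul A 1 r (unit_at A r) b)"
    using smul_assoc[OF G a unit_at_closed[OF G] b] by simp
  also have "\<dots> = mul1 A a b"
    by (simp add: smul_unit_at_left[OF G b] mul1_eq_smul)
  finally show ?thesis .
qed

lemma smul_transport_right:
  assumes G: "gring A" and d: "d \<in> carr A {r}" and a: "a \<in> carr A {1}"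
  shows "smul A q r d (tr A {1} {q} [1 \<mapsto> q] a) = tr A {1} {q} [1 \<mapsto> q] (smul A 1 r d a)"
  using scon_smul_assoc[OF G d a gring_one_closed[OF G], of q]
  by (simp add: transport_singleton_eq_scon[OF G] a smul_closed[OF G d a] unit_at_one[OF G])

lemma scon_transport:
  assumes G: "gring A" and a: "a \<in> carr A {1}" and c: "c \<in> carr A {1}"
  shows "scon A p 1 (tr A {1} {p} [1 \<mapsto> p] a) (tr A {1} {p} [1 \<mapsto> p] c) = con1 A a c"
proof -
  have "smul A 1 p (tr A {1} {p} [1 \<mapsto> p] c) (one A) = c"
    using smul_transport_left[OF G c gring_one_closed[OF G]] mul1_one_right[OF G c] by simp
  moreover have "scon A 1 p a (one A) = tr A {1} {p} [1 \<mapsto> p] a"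
    using transport_singleton_eq_scon[OF G a] unit_at_one[OF G] by simp
  ultimately show ?thesis
    using scon_smul_right[OF G a transport_singleton_closed[OF G c, of p] gring_one_closed[OF G], of 1]
    by simp
qed

lemma fib_cmap: "fib (cmap X) 1 = X"
  by (auto simp: fib_def cmap_def)

lemma fib_idm: "x \<in> X \<Longrightarrow> fib (idm X) x = {x}"
  by (auto simp: fib_def idm_def)

lemma pmap_cmap: "pmap X {1} (cmap X)"
  by (auto simp: pmap_def cmap_def ran_def split: if_splits)

lemma pmap_idm: "pmap X X (idm X)"
  by (auto simp: pmap_def idm_def ran_def split: if_splits)

lemma dom_idm: "dom (idm X) = X"
  by (auto simp: idm_def dom_def)

lemma cmap_singleton: "cmap {p} = [p \<mapsto> 1]"
  by (rule ext) (simp add: cmap_def)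

lemma map_comp_one_cmap: "[1 \<mapsto> 1] \<circ>\<^sub>m cmap X = cmap X"
  by (rule ext) (simp add: map_comp_def cmap_def)

lemma cmap_restrict: "cmap X |` X = cmap X"
  by (rule ext) (auto simp: restrict_map_def cmap_def)

lemma idm_restrict_singleton: "p \<in> P \<Longrightarrow> idm P |` {p} = [p \<mapsto> p]"
  by (rule ext) (auto simp: restrict_map_def idm_def)

lemma fib_cmap_comp: "pmap Y Z g \<Longrightarrow> dom g = Y \<Longrightarrow> fib (cmap Z \<circ>\<^sub>m g) 1 = Y"
  by (auto simp: fib_def cmap_def pmap_def map_comp_def ran_def split: option.splits)

lemma dom_map_comp_total: "pmap X Y f \<Longrightarrow> dom g = Y \<Longrightarrow> dom f = X \<Longrightarrow> dom (g \<circ>\<^sub>m f) = X"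
  by (auto simp: pmap_def map_comp_def ran_def split: option.splits)

lemma pmap_map_comp: "pmap Y Z g \<Longrightarrow> pmap X Y f \<Longrightarrow> pmap X Z (g \<circ>\<^sub>m f)"
  unfolding pmap_def ran_def by (fastforce simp: map_comp_Some_iff)

lemma map_comp_assoc: "(f \<circ>\<^sub>m g) \<circ>\<^sub>m h = f \<circ>\<^sub>m (g \<circ>\<^sub>m h)"
  by (auto simp: map_comp_def fun_eq_iff split: option.splits)

lemma restrict_map_dom: "dom f \<subseteq> X \<Longrightarrow> f |` X = f"
  unfolding restrict_map_def fun_eq_iff by (metis domIff subsetD)

lemma restrict_fmul: "restrict (fmul A Z g f a b) Z = fmul A Z g f a b"
  by (simp add: fmul_def)

lemma restrict_singleton: "restrict F {y} = single y (F y)" \<comment> \<open>not a simp rule: it loops on single\<close>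
  by auto

lemma mul_assoc_total:
  assumes G: "gring A" and fin: "finite X" "finite Y" "finite Z"
    and g: "pmap Y Z g" "dom g = Y" and f: "pmap X Y f" "dom f = X"
    and b: "b \<in> carr A Z" and c: "c \<in> tup A Z g" and a: "a \<in> tup A Y f"
  shows "mul A X Z (g \<circ>\<^sub>m f) b (fmul A Z g f c a) = mul A X Y f (mul A Y Z g b c) a"
proof -
  have gf: "pmap X Z (g \<circ>\<^sub>m f)" "dom (g \<circ>\<^sub>m f) = X"
    using pmap_map_comp[OF g(1) f(1)] dom_map_comp_total[OF f(1) g(2) f(2)] by simp_all
  have b': "single 1 b \<in> tup A {1} (cmap Z)"
    using b by (simp add: tup_def fib_cmap)
  have "fmul A {1} (cmap Z) (g \<circ>\<^sub>m f) (single 1 b) (fmul A Z g f c a) =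
      fmul A {1} (cmap Z \<circ>\<^sub>m g) f (fmul A {1} (cmap Z) g (single 1 b) c) a"
    by (rule gring_fmul_assoc[OF G _ fin(3,2,1) pmap_cmap g(1) f(1) b' c a]) simp
  from fun_cong[OF this, of 1] show ?thesis
    using c a
    by (simp add: fmul_apply fib_cmap fib_cmap_comp[OF g] fib_cmap_comp[OF gf] restrict_map_dom
        f(2) g(2) gf(2) map_comp_assoc tup_def extensional_restrict restrict_fmul)
qed

lemma embed_in_tup:
  assumes G: "gring A" and X: "finite X" and c: "\<forall>x\<in>X. c x \<in> carr A {1}"
  shows "embed A X c \<in> tup A X (idm X)"
  using c X by (auto simp: embed_def tup_def fib_idm intro!: gring_tr_closed[OF G] pbij_singleton)

section \<open>A fibre product over [1]\<close>

text \<open>The fibre product of the pullback axiom for [1 \<mapsto> 1] and cmap X is the copy tagged X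
  of X inside nat; tag_map is the canonical bijection onto it and untag_map the projection back.\<close>

abbreviation tag :: "nat \<Rightarrow> nat" where
  "tag x \<equiv> prod_encode (1, x)"

definition tagged :: "nat set \<Rightarrow> nat set" where
  "tagged X = tag ` X"

definition tag_map :: "nat set \<Rightarrow> nat \<Rightarrow> nat option" where
  "tag_map X = (\<lambda>x. if x \<in> X then Some (tag x) else None)"

definition untag_map :: "nat set \<Rightarrow> nat \<Rightarrow> nat option" where
  "untag_map X = (\<lambda>p. if p \<in> tagged X then Some (snd (prod_decode p)) else None)"

lemma tag_in_tagged: "tag x \<in> tagged X \<longleftrightarrow> x \<in> X"
  by (auto simp: tagged_def)

lemma finite_tagged: "finite X \<Longrightarrow> finite (tagged X)"
  by (simp add: tagged_def)

lemma tagged_singleton: "tagged {x} = {tag x}"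
  by (simp add: tagged_def)

lemma tag_map_singleton: "tag_map {x} = [x \<mapsto> tag x]"
  by (rule ext) (auto simp: tag_map_def)

lemma untag_map_singleton: "untag_map {x} = [tag x \<mapsto> x]"
  by (rule ext) (auto simp: untag_map_def tagged_def)

lemma pmap_untag_map: "pmap (tagged X) X (untag_map X)"
  by (auto simp: pmap_def untag_map_def ran_def tagged_def split: if_splits)

lemma pbij_tag_map: "pbij X (tagged X) (tag_map X)"
  by (auto simp: pbij_def pmap_def tag_map_def ran_def tagged_def inj_on_def dom_def split: if_splits)

lemma fib_untag_map: "x \<in> X \<Longrightarrow> fib (untag_map X) x = {tag x}"
  by (auto simp: fib_def untag_map_def tagged_def)

lemma cmap_comp_untag_map: "cmap X \<circ>\<^sub>m untag_map X = cmap (tagged X)"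
  by (rule ext) (auto simp: map_comp_def cmap_def untag_map_def tagged_def)

lemma idm_comp_untag_map: "idm X \<circ>\<^sub>m untag_map X = untag_map X"
  by (rule ext) (auto simp: map_comp_def idm_def untag_map_def tagged_def)

lemma untag_map_comp_idm: "untag_map X \<circ>\<^sub>m idm (tagged X) = untag_map X"
  by (rule ext) (auto simp: map_comp_def idm_def untag_map_def)

lemma untag_map_restrict: "untag_map X |` tagged X = untag_map X"
  by (rule ext) (auto simp: restrict_map_def untag_map_def)

lemma untag_map_restrict_singleton: "x \<in> X \<Longrightarrow> untag_map X |` {tag x} = [tag x \<mapsto> x]"
  by (rule ext) (auto simp: restrict_map_def untag_map_def tagged_def)

lemma ptr_tag_map: "ptr (tag_map X) = untag_map X"
proof (rule ext)
  fix p show "ptr (tag_map X) p = untag_map X p"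
  proof (cases "p \<in> tagged X")
    case True
    then obtain x where x: "x \<in> X" "p = tag x" by (auto simp: tagged_def)
    have "p \<in> ran (tag_map X)" using x by (auto simp: ran_def tag_map_def)
    moreover have "(THE z. tag_map X z = Some p) = x"
      using x by (auto simp: tag_map_def split: if_splits)
    ultimately show ?thesis using True x by (simp add: ptr_def untag_map_def)
  next
    case False
    have "p \<notin> ran (tag_map X)"
      using False by (auto simp: ran_def tag_map_def tagged_def split: if_splits)
    then show ?thesis using False by (simp add: ptr_def untag_map_def)
  qed
qed

lemma unit_pb_untag_map: "unit_pb A X (untag_map X) = restrict (\<lambda>x. unit_at A (tag x)) X"
proof (rule ext)
  fix x show "unit_pb A X (untag_map X) x = restrict (\<lambda>x. unit_at A (tag x)) X x"
  proof (cases "x \<in> X")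
    case True
    have "x \<in> ran (untag_map X)"
      using True by (auto simp: ran_def untag_map_def tagged_def intro!: exI[of _ "tag x"])
    moreover have "(THE p. untag_map X p = Some x) = tag x"
      using True by (auto simp: untag_map_def tagged_def split: if_splits)
    ultimately show ?thesis using True by (simp add: unit_pb_def)
  qed (simp add: unit_pb_def)
qed

lemma pb_one_cmap: "pb [1 \<mapsto> 1] (cmap X) = tagged X"
proof -
  have "{(z, x). z \<in> dom [1 \<mapsto> 1] \<and> x \<in> dom (cmap X) \<and> [1 \<mapsto> 1] z = cmap X x} = {1} \<times> X"
    by (auto simp: cmap_def split: if_splits)
  then show ?thesis by (auto simp: pb_def tagged_def)
qed

lemma pbf_one_cmap: "pbf [1 \<mapsto> 1] (cmap X) = cmap (tagged X)"
  unfolding pbf_def pb_one_cmap by (rule ext) (auto simp: cmap_def tagged_def)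

lemma pbg_one_cmap: "pbg [1 \<mapsto> 1] (cmap X) = untag_map X"
  unfolding pbg_def pb_one_cmap untag_map_def by (rule refl)

lemma pb_a_one_cmap:
  "pb_a A [1 \<mapsto> 1] (cmap X) X a = restrict (\<lambda>x. tr A {1} {tag x} [1 \<mapsto> tag x] (a 1)) X"
proof (rule ext)
  fix x show "pb_a A [1 \<mapsto> 1] (cmap X) X a x = restrict (\<lambda>x. tr A {1} {tag x} [1 \<mapsto> tag x] (a 1)) X x"
  proof (cases "x \<in> X")
    case True
    have "(\<lambda>z. if z = 1 then Some (prod_encode (z, x)) else None) = [1 \<mapsto> tag x]"
      by (rule ext) auto
    with True show ?thesis unfolding pb_a_def pbg_one_cmap
      by (simp add: fib_untag_map singleton_simps cmap_def domIff)
  qed (simp add: pb_a_def)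
qed

lemma pb_c_one_cmap:
  "pb_c A [1 \<mapsto> 1] (cmap X) {1} c = single 1 (tr A X (tagged X) (tag_map X) (c 1))"
proof (rule ext)
  fix z show "pb_c A [1 \<mapsto> 1] (cmap X) {1} c z = single 1 (tr A X (tagged X) (tag_map X) (c 1)) z"
  proof (cases "z = 1")
    case True
    have "(\<lambda>x. if x \<in> fib (cmap X) 1 then Some (tag x) else None) = tag_map X"
      by (rule ext) (auto simp: tag_map_def fib_cmap)
    with True show ?thesis unfolding pb_c_def pbf_one_cmap
      by (simp add: fib_cmap tag_map_def)
  qed (simp add: pb_c_def)
qed

lemma dom_untag_map: "dom (untag_map X) = tagged X"
  by (auto simp: untag_map_def dom_def)

lemma mul1_con_cmap:
  assumes G: "gring A" and X: "finite X" and u: "u \<in> carr A X" and d: "d \<in> carr A X"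
    and y: "y \<in> carr A {1}"
  shows "mul1 A (con A X {1} (cmap X) u (single 1 d)) y =
    con A (tagged X) {1} (cmap (tagged X))
      (mul A (tagged X) X (untag_map X) u (restrict (\<lambda>x. tr A {1} {tag x} [1 \<mapsto> tag x] y) X))
      (single 1 (tr A X (tagged X) (tag_map X) d))"
proof -
  have u': "single 1 u \<in> tup A {1} ([1 \<mapsto> 1] \<circ>\<^sub>m cmap X)"
    using u by (simp add: tup_def map_comp_one_cmap fib_cmap)
  have d': "single 1 d \<in> tup A {1} (cmap X)"
    using d by (simp add: tup_def fib_cmap)
  have "fmul A {1} [1 \<mapsto> 1] [1 \<mapsto> 1] (fcon A {1} [1 \<mapsto> 1] (cmap X) (single 1 u) (single 1 d)) (single 1 y) =
      fcon A {1} ([1 \<mapsto> 1] \<circ>\<^sub>m [1 \<mapsto> 1::nat]) (pbf [1 \<mapsto> 1] (cmap X))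
        (fmul A {1} ([1 \<mapsto> 1] \<circ>\<^sub>m cmap X) (pbg [1 \<mapsto> 1] (cmap X)) (single 1 u)
          (pb_a A [1 \<mapsto> 1] (cmap X) X (single 1 y)))
        (pb_c A [1 \<mapsto> 1] (cmap X) {1} (single 1 d))"
    by (rule gring_fmul_fcon_pullback[OF G _ _ X _ pmap_singleton pmap_cmap pmap_singleton
          u' tup_singleton[OF y] d']) simp_all
  from fun_cong[OF this, of 1] show ?thesis
    by (simp add: pbf_one_cmap pbg_one_cmap pb_a_one_cmap pb_c_one_cmap fmul_apply fcon_apply
        map_comp_one_cmap cmap_comp_untag_map untag_map_restrict cmap_restrict fib_cmap singleton_simps
        mul1_eq_smul restrict_fmul_singleton restrict_fcon_singleton)
qed

lemma mul1_con1_commute: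
  assumes G: "gring A" and d: "d \<in> carr A {1}" and a: "a \<in> carr A {1}" and c: "c \<in> carr A {1}"
  shows "mul1 A (con1 A d c) a = con1 A (mul1 A d a) c"
proof -
  have "restrict (\<lambda>x. tr A {1} {tag x} [1 \<mapsto> tag x] a) {1} = single 1 (tr A {1} {tag 1} [1 \<mapsto> tag 1] a)"
    by auto
  then have "mul1 A (con1 A d c) a =
      scon A (tag 1) 1 (smul A (tag 1) 1 d (tr A {1} {tag 1} [1 \<mapsto> tag 1] a))
        (tr A {1} {tag 1} [1 \<mapsto> tag 1] c)"
    using mul1_con_cmap[OF G _ d c a]
    by (simp add: cmap_singleton tagged_singleton untag_map_singleton tag_map_singleton)
  also have "\<dots> = scon A (tag 1) 1 (tr A {1} {tag 1} [1 \<mapsto> tag 1] (mul1 A d a))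
      (tr A {1} {tag 1} [1 \<mapsto> tag 1] c)"
    by (simp add: smul_transport_right[OF G d a] mul1_eq_smul)
  also have "\<dots> = con1 A (mul1 A d a) c"
    by (rule scon_transport[OF G mul1_closed[OF G d a] c])
  finally show ?thesis .
qed

text \<open>Commutativity: c \<mapsto> (1, c) is an involution of A_[1], and (d, c) = d \<circ> (1, c).\<close>

lemma con1_eq_mul1_con1_one:
  "gring A \<Longrightarrow> d \<in> carr A {1} \<Longrightarrow> c \<in> carr A {1} \<Longrightarrow> con1 A d c = mul1 A d (con1 A (one A) c)"
  using con1_mul1[OF _ _ gring_one_closed] mul1_one_right by metis

lemma con1_one_involutive: "gring A \<Longrightarrow> c \<in> carr A {1} \<Longrightarrow> con1 A (one A) (con1 A (one A) c) = c"
  using con1_mul1_con1[OF _ gring_one_closed gring_one_closed] mul1_one_left con1_one_right by metis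

lemma mul1_commute:
  assumes G: "gring A" and x: "x \<in> carr A {1}" and a: "a \<in> carr A {1}"
  shows "mul1 A x a = mul1 A a x"
proof -
  define c where "c = con1 A (one A) x"
  have c: "c \<in> carr A {1}"
    unfolding c_def by (rule con1_closed[OF G gring_one_closed[OF G] x])
  have "mul1 A x a = mul1 A (con1 A (one A) c) a"
    unfolding c_def using con1_one_involutive[OF G x] by simp
  also have "\<dots> = con1 A (mul1 A (one A) a) c"
    by (rule mul1_con1_commute[OF G gring_one_closed[OF G] a c])
  also have "\<dots> = mul1 A a (con1 A (one A) c)"
    using mul1_one_left[OF G a] con1_eq_mul1_con1_one[OF G a c] by simp
  also have "\<dots> = mul1 A a x"
    unfolding c_def using con1_one_involutive[OF G x] by simp
  finally show ?thesis .
qed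

text \<open>hcomb A X b c d is the element (b \<circ> c, d) of the definition of an h-ideal, with
  c \<in> (A_[1])^X entering through embed.\<close>

abbreviation hcomb :: "'a gring \<Rightarrow> nat set \<Rightarrow> 'a \<Rightarrow> (nat \<Rightarrow> 'a) \<Rightarrow> 'a \<Rightarrow> 'a" where
  "hcomb A X b c d \<equiv> con A X {1} (cmap X) (mul A X X (idm X) b (embed A X c)) (single 1 d)"

lemma fmul_idm_untag_map_apply:
  "x \<in> X \<Longrightarrow> fmul A X (idm X) (untag_map X) e a x = smul A (tag x) x (e x) (a x)"
  by (simp add: fmul_apply idm_comp_untag_map fib_untag_map fib_idm untag_map_restrict_singleton
      restrict_singleton[of a])

lemma fmul_untag_map_idm_apply:
  "x \<in> X \<Longrightarrow> fmul A X (untag_map X) (idm (tagged X)) u e x = smul A (tag x) (tag x) (u x) (e (tag x))"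
  by (simp add: fmul_apply untag_map_comp_idm fib_untag_map idm_restrict_singleton tag_in_tagged
      restrict_singleton[of e])

lemma smul_transport_transport:
  assumes G: "gring A" and c: "c \<in> carr A {1}" and y: "y \<in> carr A {1}"
  shows "smul A q r (tr A {1} {r} [1 \<mapsto> r] c) (tr A {1} {q} [1 \<mapsto> q] y) =
    tr A {1} {q} [1 \<mapsto> q] (mul1 A c y)"
  using smul_transport_right[OF G transport_singleton_closed[OF G c] y] smul_transport_left[OF G c y]
  by simp

lemma fmul_embed_untag_map:
  assumes G: "gring A" and c: "\<forall>x\<in>X. c x \<in> carr A {1}" and y: "y \<in> carr A {1}"
  shows "fmul A X (idm X) (untag_map X) (embed A X c) (restrict (\<lambda>x. tr A {1} {tag x} [1 \<mapsto> tag x] y) X) =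
    fmul A X (untag_map X) (idm (tagged X)) (unit_pb A X (untag_map X))
      (embed A (tagged X) (restrict (\<lambda>p. mul1 A (c (snd (prod_decode p))) y) (tagged X)))"
proof (rule ext)
  fix x
  show "fmul A X (idm X) (untag_map X) (embed A X c)
      (restrict (\<lambda>x. tr A {1} {tag x} [1 \<mapsto> tag x] y) X) x =
    fmul A X (untag_map X) (idm (tagged X)) (unit_pb A X (untag_map X))
      (embed A (tagged X) (restrict (\<lambda>p. mul1 A (c (snd (prod_decode p))) y) (tagged X))) x"
  proof (cases "x \<in> X")
    case True
    \<comment> \<open>at x both sides are the transport of c x \<circ> y to tag x\<close>
    with c show ?thesis
      using smul_transport_transport[OF G _ y]
        smul_unit_at_left[OF G transport_singleton_closed[OF G mul1_closed[OF G _ y]]]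
      by (simp add: fmul_idm_untag_map_apply fmul_untag_map_idm_apply embed_def unit_pb_untag_map
          tag_in_tagged)
  qed (simp add: fmul_def)
qed

lemma mul1_hcomb:
  assumes G: "gring A" and X: "finite X" and b: "b \<in> carr A X" and d: "d \<in> carr A X"
    and c: "\<forall>x\<in>X. c x \<in> carr A {1}" and y: "y \<in> carr A {1}"
  shows "mul1 A (hcomb A X b c d) y =
    hcomb A (tagged X) (tr A X (tagged X) (tag_map X) b)
      (restrict (\<lambda>p. mul1 A (c (snd (prod_decode p))) y) (tagged X)) (tr A X (tagged X) (tag_map X) d)"
proof -
  define P where "P = tagged X"
  define e where "e = embed A X c"
  define a where "a = restrict (\<lambda>x. tr A {1} {tag x} [1 \<mapsto> tag x] y) X"
  define c' where "c' = restrict (\<lambda>p. mul1 A (c (snd (prod_decode p))) y) P"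
  define e' where "e' = embed A P c'"
  define U where "U = unit_pb A X (untag_map X)"
  have P: "finite P"
    unfolding P_def using X by (rule finite_tagged)
  have e: "e \<in> tup A X (idm X)"
    unfolding e_def by (rule embed_in_tup[OF G X c])
  have a: "a \<in> tup A X (untag_map X)"
    unfolding a_def using y by (auto simp: tup_def fib_untag_map intro: transport_singleton_closed[OF G])
  have c': "\<forall>p\<in>P. c' p \<in> carr A {1}"
    unfolding c'_def P_def using c y by (auto simp: tagged_def intro!: mul1_closed[OF G])
  have e': "e' \<in> tup A P (idm P)"
    unfolding e'_def by (rule embed_in_tup[OF G P c'])
  have U: "U \<in> tup A X (untag_map X)"
    unfolding U_def unit_pb_untag_map by (auto simp: tup_def fib_untag_map unit_at_closed[OF G])
  have pmaps: "pmap X X (idm X)" "pmap P X (untag_map X)" "pmap P P (idm P)"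
    unfolding P_def by (rule pmap_idm pmap_untag_map pmap_idm)+
  have doms: "dom (idm X) = X" "dom (untag_map X) = P" "dom (idm P) = P"
    unfolding P_def by (rule dom_idm dom_untag_map dom_idm)+
  have coefficients: "fmul A X (idm X) (untag_map X) e a = fmul A X (untag_map X) (idm P) U e'"
    unfolding e_def a_def U_def e'_def c'_def P_def by (rule fmul_embed_untag_map[OF G c y])
  have "mul A P X (untag_map X) (mul A X X (idm X) b e) a =
      mul A P X (untag_map X) b (fmul A X (idm X) (untag_map X) e a)"
    using mul_assoc_total[OF G P X X pmaps(1) doms(1) pmaps(2) doms(2) b e a]
    by (simp add: P_def idm_comp_untag_map)
  also have "\<dots> = mul A P P (idm P) (mul A P X (untag_map X) b U) e'"
    using mul_assoc_total[OF G P P X pmaps(2) doms(2) pmaps(3) doms(3) b U e'] coefficients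
    by (simp add: P_def untag_map_comp_idm)
  also have "mul A P X (untag_map X) b U = tr A X P (tag_map X) b"
    unfolding P_def U_def using gring_mul_unit_transport[OF G X finite_tagged[OF X] pbij_tag_map b]
    by (simp add: ptr_tag_map)
  finally have inner: "mul A P X (untag_map X) (mul A X X (idm X) b e) a =
      mul A P P (idm P) (tr A X P (tag_map X) b) e'" .
  have "mul1 A (hcomb A X b c d) y =
      con A P {1} (cmap P) (mul A P X (untag_map X) (mul A X X (idm X) b e) a)
        (single 1 (tr A X P (tag_map X) d))"
    unfolding P_def e_def a_def
    by (rule mul1_con_cmap[OF G X gring_mul_closed[OF G X X pmaps(1) b e[unfolded e_def]] d y])
  then show ?thesis
    unfolding inner by (simp add: P_def e'_def c'_def)
qed

section \<open>h-ideals\<close>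

lemma h_idealD:
  "h_ideal A I \<Longrightarrow> finite X \<Longrightarrow> b \<in> carr A X \<Longrightarrow> d \<in> carr A X \<Longrightarrow> c \<in> extensional X \<Longrightarrow>
    \<forall>x\<in>X. c x \<in> I \<Longrightarrow> hcomb A X b c d \<in> I"
  unfolding h_ideal_def by blast

lemma h_ideal_subset: "h_ideal A I \<Longrightarrow> I \<subseteq> carr A {1}"
  unfolding h_ideal_def by blast

lemma h_idealI:
  "I \<subseteq> carr A {1} \<Longrightarrow>
    (\<And>X b d c. finite X \<Longrightarrow> b \<in> carr A X \<Longrightarrow> d \<in> carr A X \<Longrightarrow> c \<in> extensional X \<Longrightarrow>
      \<forall>x\<in>X. c x \<in> I \<Longrightarrow> hcomb A X b c d \<in> I) \<Longrightarrow> h_ideal A I"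
  unfolding h_ideal_def by blast

lemma hcomb_closed:
  assumes G: "gring A" and X: "finite X" and b: "b \<in> carr A X" and d: "d \<in> carr A X"
    and c: "\<forall>x\<in>X. c x \<in> carr A {1}"
  shows "hcomb A X b c d \<in> carr A {1}"
proof (rule gring_con_closed[OF G X _ pmap_cmap])
  show "mul A X X (idm X) b (embed A X c) \<in> carr A X"
    by (rule gring_mul_closed[OF G X X pmap_idm b embed_in_tup[OF G X c]])
  show "single 1 d \<in> tup A {1} (cmap X)"
    using d by (simp add: tup_def fib_cmap)
qed simp

lemma h_ideal_Union_chain:
  assumes C: "C \<noteq> {}" "subset.chain \<A> C" and I: "\<And>J. J \<in> C \<Longrightarrow> h_ideal A J"
  shows "h_ideal A (\<Union>C)"
proof (rule h_idealI)
  show "\<Union>C \<subseteq> carr A {1}"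
    using I h_ideal_subset by blast
next
  fix X b d c
  assume X: "finite X" and b: "b \<in> carr A X" and d: "d \<in> carr A X" and c: "c \<in> extensional X"
    and cC: "\<forall>x\<in>X. c x \<in> \<Union>C"
  obtain J where "J \<in> C" "c ` X \<subseteq> J"
    using finite_subset_Union_chain[of "c ` X" C \<A>] X cC C by blast
  then show "hcomb A X b c d \<in> \<Union>C"
    using h_idealD[OF I X b d c] by blast
qed

lemma embed_singleton: "gring A \<Longrightarrow> z \<in> carr A {1} \<Longrightarrow> embed A {1} (single 1 z) = single 1 z"
  by (rule ext) (simp add: embed_def gring_tr_id[of A "{1}", unfolded idm_singleton])

lemma h_ideal_mul1_left:
  assumes G: "gring A" and I: "h_ideal A I" and z: "z \<in> I" and y: "y \<in> carr A {1}"
  shows "mul1 A y z \<in> I"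
proof -
  have zc: "z \<in> carr A {1}"
    using h_ideal_subset[OF I] z by blast
  have "hcomb A {1} y (single 1 z) (one A) = mul1 A y z"
    using con1_one_right[OF G mul1_closed[OF G y zc]]
    by (simp add: embed_singleton[OF G zc] cmap_singleton mul1_def idm_singleton)
  moreover have "hcomb A {1} y (single 1 z) (one A) \<in> I"
    by (rule h_idealD[OF I _ y gring_one_closed[OF G]]) (simp_all add: z)
  ultimately show ?thesis by simp
qed

lemma h_ideal_mul1_right:
  assumes G: "gring A" and I: "h_ideal A I" and z: "z \<in> I" and y: "y \<in> carr A {1}"
  shows "mul1 A z y \<in> I"
  using h_ideal_mul1_left[OF G I z y] mul1_commute[OF G _ y] h_ideal_subset[OF I] z by auto

definition colon :: "'a gring \<Rightarrow> 'a set \<Rightarrow> 'a \<Rightarrow> 'a set" where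
  "colon A I y = {z \<in> carr A {1}. mul1 A z y \<in> I}"

lemma h_ideal_colon:
  assumes G: "gring A" and I: "h_ideal A I" and y: "y \<in> carr A {1}"
  shows "h_ideal A (colon A I y)"
proof (rule h_idealI)
  show "colon A I y \<subseteq> carr A {1}"
    unfolding colon_def by blast
next
  fix X b d c
  assume X: "finite X" and b: "b \<in> carr A X" and d: "d \<in> carr A X" and c: "c \<in> extensional X"
    and cI: "\<forall>x\<in>X. c x \<in> colon A I y"
  have cc: "\<forall>x\<in>X. c x \<in> carr A {1}"
    using cI unfolding colon_def by blast
  have P: "finite (tagged X)"
    by (rule finite_tagged[OF X])
  have cy: "\<forall>p\<in>tagged X. restrict (\<lambda>p. mul1 A (c (snd (prod_decode p))) y) (tagged X) p \<in> I"
    using cI by (auto simp: tagged_def colon_def)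
  have "hcomb A (tagged X) (tr A X (tagged X) (tag_map X) b)
      (restrict (\<lambda>p. mul1 A (c (snd (prod_decode p))) y) (tagged X))
      (tr A X (tagged X) (tag_map X) d) \<in> I"
    by (rule h_idealD[OF I P gring_tr_closed[OF G X P pbij_tag_map b]
          gring_tr_closed[OF G X P pbij_tag_map d]
          restrict_extensional cy])
  then have "mul1 A (hcomb A X b c d) y \<in> I"
    by (simp only: mul1_hcomb[OF G X b d cc y])
  then show "hcomb A X b c d \<in> colon A I y"
    unfolding colon_def using hcomb_closed[OF G X b d cc] by blast
qed

lemma colon_supset:
  assumes G: "gring A" and I: "h_ideal A I" and y: "y \<in> carr A {1}"
  shows "I \<subseteq> colon A I y"
  unfolding colon_def using h_ideal_mul1_right[OF G I _ y] h_ideal_subset[OF I] by blast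

section \<open>Primes maximal with respect to avoiding a multiplicative set\<close>

lemma exists_maximal_h_ideal_avoiding:
  assumes I: "h_ideal A I" and IT: "I \<inter> T = {}"
  obtains Q where "h_ideal A Q" "I \<subseteq> Q" "Q \<inter> T = {}"
    "\<And>J. h_ideal A J \<Longrightarrow> Q \<subseteq> J \<Longrightarrow> J \<inter> T = {} \<Longrightarrow> J = Q"
proof -
  define S where "S = {J. h_ideal A J \<and> I \<subseteq> J \<and> J \<inter> T = {}}"
  have "\<exists>M\<in>S. \<forall>J\<in>S. M \<subseteq> J \<longrightarrow> J = M"
  proof (rule subset_Zorn_nonempty)
    show "S \<noteq> {}"
      using I IT unfolding S_def by blast
    fix C assume C: "C \<noteq> {}" "subset.chain S C"
    then have CS: "C \<subseteq> S"
      by (simp add: subset.chain_def)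
    have "h_ideal A (\<Union>C)"
      by (rule h_ideal_Union_chain[OF C]) (use CS in \<open>auto simp: S_def\<close>)
    moreover have "I \<subseteq> \<Union>C" "\<Union>C \<inter> T = {}"
      using C(1) CS unfolding S_def by blast+
    ultimately show "\<Union>C \<in> S"
      unfolding S_def by blast
  qed
  then obtain Q where Q: "Q \<in> S" and max: "\<And>J. J \<in> S \<Longrightarrow> Q \<subseteq> J \<Longrightarrow> J = Q"
    by blast
  show thesis
  proof (rule that)
    show "h_ideal A Q" "I \<subseteq> Q" "Q \<inter> T = {}"
      using Q unfolding S_def by blast+
    show "J = Q" if "h_ideal A J" "Q \<subseteq> J" "J \<inter> T = {}" for J
      using max[of J] that \<open>I \<subseteq> Q\<close> unfolding S_def by blast
  qed
qed

lemma gprime_if_maximal_avoiding: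
  assumes G: "gring A" and Q: "h_ideal A Q" and QT: "Q \<inter> T = {}"
    and max: "\<And>J. h_ideal A J \<Longrightarrow> Q \<subseteq> J \<Longrightarrow> J \<inter> T = {} \<Longrightarrow> J = Q"
    and T_one: "one A \<in> T" and T_mul: "\<And>s t. s \<in> T \<Longrightarrow> t \<in> T \<Longrightarrow> mul1 A s t \<in> T"
  shows "gprime A Q"
proof -
  have meets: "\<exists>t\<in>T. t \<in> carr A {1} \<and> mul1 A t y \<in> Q"
    if y: "y \<in> carr A {1}" and z: "z \<in> carr A {1}" "z \<notin> Q" "mul1 A z y \<in> Q" for y z
  proof -
    have "colon A Q y \<noteq> Q"
      using z unfolding colon_def by blast
    then have "colon A Q y \<inter> T \<noteq> {}"
      using max[OF h_ideal_colon[OF G Q y] colon_supset[OF G Q y]] by blast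
    then show ?thesis
      unfolding colon_def by blast
  qed
  have "x \<in> Q \<or> y \<in> Q" if x: "x \<in> carr A {1}" and y: "y \<in> carr A {1}" and xy: "mul1 A x y \<in> Q" for x y
  proof (rule ccontr)
    assume "\<not> (x \<in> Q \<or> y \<in> Q)"
    then have xQ: "x \<notin> Q" and yQ: "y \<notin> Q" by simp_all
    obtain s where s: "s \<in> T" "s \<in> carr A {1}" "mul1 A s y \<in> Q"
      using meets[OF y x xQ xy] by blast
    obtain t where t: "t \<in> T" "mul1 A t s \<in> Q"
      using meets[OF s(2) y yQ] s(3) mul1_commute[OF G s(2) y] by auto
    show False
      using t T_mul[OF t(1) s(1)] QT by blast
  qed
  moreover have "one A \<notin> Q"
    using T_one QT by blast
  ultimately show ?thesis
    unfolding gprime_def using Q by blast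
qed

section \<open>Preimages of primes\<close>

lemma ghom_transport_singleton:
  assumes GA: "gring A" and GB: "gring B" and H: "ghom A B \<phi>" and a: "a \<in> carr A {1}"
  shows "\<phi> {x} (tr A {1} {x} [1 \<mapsto> x] a) = tr B {1} {x} [1 \<mapsto> x] (\<phi> {1} a)"
proof -
  have "htup \<phi> {x} [1 \<mapsto> x] (single x (one A)) = single x (one B)"
    by (rule ext) (simp add: htup_def fib_singleton ghom_one[OF H])
  then show ?thesis
    using ghom_con[OF H _ _ pmap_singleton a tup_singleton[OF gring_one_closed[OF GA]]]
    by (simp add: transport_singleton_eq_scon[OF GA a]
        transport_singleton_eq_scon[OF GB ghom_closed[OF H _ a]]
        unit_at_one[OF GA] unit_at_one[OF GB])
qed

lemma ghom_mul1:
  assumes H: "ghom A B \<phi>" and a: "a \<in> carr A {1}" and b: "b \<in> carr A {1}"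
  shows "\<phi> {1} (mul1 A a b) = mul1 B (\<phi> {1} a) (\<phi> {1} b)"
proof -
  have "htup \<phi> {1} [1 \<mapsto> 1] (single 1 b) = single 1 (\<phi> {1} b)"
    by (rule ext) (simp add: htup_def singleton_simps)
  then show ?thesis
    using ghom_mul[OF H _ _ pmap_singleton a tup_singleton[OF b]] by (simp add: mul1_eq_smul)
qed

lemma ghom_hcomb:
  assumes GA: "gring A" and GB: "gring B" and H: "ghom A B \<phi>" and X: "finite X"
    and b: "b \<in> carr A X" and d: "d \<in> carr A X" and c: "\<forall>x\<in>X. c x \<in> carr A {1}"
  shows "\<phi> {1} (hcomb A X b c d) = hcomb B X (\<phi> X b) (restrict (\<lambda>x. \<phi> {1} (c x)) X) (\<phi> X d)"
proof -
  have e: "embed A X c \<in> tup A X (idm X)"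
    by (rule embed_in_tup[OF GA X c])
  have d': "single 1 d \<in> tup A {1} (cmap X)"
    using d by (simp add: tup_def fib_cmap)
  have "htup \<phi> {1} (cmap X) (single 1 d) = single 1 (\<phi> X d)"
    by (rule ext) (simp add: htup_def fib_cmap)
  moreover have "htup \<phi> X (idm X) (embed A X c) = embed B X (restrict (\<lambda>x. \<phi> {1} (c x)) X)"
    by (rule ext) (simp add: htup_def embed_def fib_idm ghom_transport_singleton[OF GA GB H] c)
  ultimately show ?thesis
    using ghom_con[OF H X _ pmap_cmap gring_mul_closed[OF GA X X pmap_idm b e] d']
      ghom_mul[OF H X X pmap_idm b e]
    by simp
qed

lemma h_ideal_hpre:
  assumes GA: "gring A" and GB: "gring B" and H: "ghom A B \<phi>" and I: "h_ideal B I"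
  shows "h_ideal A (hpre A \<phi> I)"
proof (rule h_idealI)
  show "hpre A \<phi> I \<subseteq> carr A {1}"
    unfolding hpre_def by blast
next
  fix X b d c
  assume X: "finite X" and b: "b \<in> carr A X" and d: "d \<in> carr A X" and c: "c \<in> extensional X"
    and cI: "\<forall>x\<in>X. c x \<in> hpre A \<phi> I"
  have cc: "\<forall>x\<in>X. c x \<in> carr A {1}"
    using cI unfolding hpre_def by blast
  have "hcomb B X (\<phi> X b) (restrict (\<lambda>x. \<phi> {1} (c x)) X) (\<phi> X d) \<in> I"
    using cI
    by (intro h_idealD[OF I X ghom_closed[OF H X b] ghom_closed[OF H X d]]) (auto simp: hpre_def)
  then show "hcomb A X b c d \<in> hpre A \<phi> I"
    unfolding hpre_def using hcomb_closed[OF GA X b d cc] ghom_hcomb[OF GA GB H X b d cc] by simp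
qed

lemma gprime_hpre:
  assumes GA: "gring A" and GB: "gring B" and H: "ghom A B \<phi>" and Q: "gprime B Q"
  shows "gprime A (hpre A \<phi> Q)"
  using Q h_ideal_hpre[OF GA GB H] ghom_one[OF H] ghom_mul1[OF H] ghom_closed[OF H]
  unfolding gprime_def hpre_def by (auto simp: gring_one_closed[OF GA] intro: mul1_closed[OF GA])

lemma exists_gprime_hpre_subset:
  assumes GA: "gring A" and GB: "gring B" and H: "ghom A B \<phi>" and I: "h_ideal B I"
    and P: "gprime A P" and IP: "hpre A \<phi> I \<subseteq> P"
  obtains Q where "Q \<in> Vz B I" "hpre A \<phi> Q \<subseteq> P"
proof -
  define T where "T = \<phi> {1} ` (carr A {1} - P)"
  have IT: "I \<inter> T = {}"
    using IP unfolding T_def hpre_def by blast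
  obtain Q where Q: "h_ideal B Q" "I \<subseteq> Q" "Q \<inter> T = {}"
    and max: "\<And>J. h_ideal B J \<Longrightarrow> Q \<subseteq> J \<Longrightarrow> J \<inter> T = {} \<Longrightarrow> J = Q"
    using exists_maximal_h_ideal_avoiding[OF I IT] by metis
  have "gprime B Q"
  proof (rule gprime_if_maximal_avoiding[OF GB Q(1,3) max])
    show "one B \<in> T"
      using P gring_one_closed[OF GA] ghom_one[OF H] unfolding T_def gprime_def by force
    show "mul1 B s t \<in> T" if st: "s \<in> T" "t \<in> T" for s t
    proof -
      obtain a b where a: "a \<in> carr A {1}" "a \<notin> P" "s = \<phi> {1} a"
        and b: "b \<in> carr A {1}" "b \<notin> P" "t = \<phi> {1} b"
        using st unfolding T_def by blast
      have "mul1 A a b \<notin> P"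
        using P a b unfolding gprime_def by blast
      then show ?thesis
        unfolding T_def a(3) b(3) ghom_mul1[OF H a(1) b(1), symmetric]
        using mul1_closed[OF GA a(1) b(1)] by blast
    qed
  qed
  moreover have "hpre A \<phi> Q \<subseteq> P"
    using Q(3) unfolding T_def hpre_def by blast
  ultimately show thesis
    using that[of Q] Q(2) unfolding Vz_def gspec_def by blast
qed

theorem lemma4p4p5:
  fixes A :: "'a gring" and B :: "'b gring" and \<phi> :: "nat set \<Rightarrow> 'a \<Rightarrow> 'b" and \<bb> :: "'b set"
  assumes "gring A" and "gring B" and "ghom A B \<phi>" and "h_ideal B \<bb>"
  shows "Vz A (hpre A \<phi> \<bb>) = zariski_closure A ((\<lambda>Q. hpre A \<phi> Q) ` Vz B \<bb>)"
proof
  have "(\<lambda>Q. hpre A \<phi> Q) ` Vz B \<bb> \<subseteq> Vz A (hpre A \<phi> \<bb>)"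
    using gprime_hpre[OF assms(1-3)] unfolding Vz_def gspec_def hpre_def by blast
  moreover have "hpre A \<phi> \<bb> \<subseteq> carr A {1}"
    unfolding hpre_def by blast
  ultimately show "zariski_closure A ((\<lambda>Q. hpre A \<phi> Q) ` Vz B \<bb>) \<subseteq> Vz A (hpre A \<phi> \<bb>)"
    unfolding zariski_closure_def by blast
next
  show "Vz A (hpre A \<phi> \<bb>) \<subseteq> zariski_closure A ((\<lambda>Q. hpre A \<phi> Q) ` Vz B \<bb>)"
  proof
    fix P assume P: "P \<in> Vz A (hpre A \<phi> \<bb>)"
    have "I \<subseteq> P" if "(\<lambda>Q. hpre A \<phi> Q) ` Vz B \<bb> \<subseteq> Vz A I" for I
    proof -
      obtain Q where "Q \<in> Vz B \<bb>" "hpre A \<phi> Q \<subseteq> P"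
        using exists_gprime_hpre_subset[OF assms] P unfolding Vz_def gspec_def by blast
      with that show ?thesis
        unfolding Vz_def by blast
    qed
    with P show "P \<in> zariski_closure A ((\<lambda>Q. hpre A \<phi> Q) ` Vz B \<bb>)"
      unfolding zariski_closure_def Vz_def by blast
  qed
qed

end
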